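(* Let $X$ be a list of $m$ inputs and $Y$ a disjoint list of $n$ inputs, with positive sizes; let $sum_x$ and $sum_y$ denote the sums of the sizes of the inputs of $X$ and of $Y$ respectively, and let $q$ be the reducer capacity, where $sum_x>q$ and $sum_y>q$. Then every X2Y mapping schema for $X$ and $Y$ with capacity $q$ has communication cost at least $\frac{2\cdot sum_x\cdot sum_y}{q}$ and uses at least $\frac{2\cdot sum_x\cdot sum_y}{q^2}$ reducers.
   Context: An X2Y mapping schema for lists $X$ and $Y$ with capacity $q$ is an assignment of the inputs of $X\cup Y$ to a collection of reducers (each input may go to several reducers) such that every reducer receives inputs of total size at most $q$ and for every $x\in X$ and $y\in Y$ there is a reducer receiving both. The communication cost is the sum over reducers of the total size of the inputs assigned to it. *)

theory Defs
  imports "HOL-Analysis.Analysis"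
begin

text \<open>Inputs of X are indexed by 0..<m with sizes wx i, inputs of Y by 0..<n with
sizes wy j (X and Y are disjoint lists; we keep the two index spaces separate).
A reducer is a pair (A, B) of the X-inputs A and the Y-inputs B assigned to it.\<close>

type_synonym reducer = "nat set \<times> nat set"

definition reducer_load :: "(nat \<Rightarrow> real) \<Rightarrow> (nat \<Rightarrow> real) \<Rightarrow> reducer \<Rightarrow> real" where
  "reducer_load wx wy r = (\<Sum>i\<in>fst r. wx i) + (\<Sum>j\<in>snd r. wy j)"

definition is_X2Y_schema ::
  "nat \<Rightarrow> nat \<Rightarrow> (nat \<Rightarrow> real) \<Rightarrow> (nat \<Rightarrow> real) \<Rightarrow> real \<Rightarrow> reducer list \<Rightarrow> bool" where
  "is_X2Y_schema m n wx wy q rs \<longleftrightarrow>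
     (\<forall>r\<in>set rs. fst r \<subseteq> {..<m} \<and> snd r \<subseteq> {..<n} \<and> reducer_load wx wy r \<le> q) \<and>
     (\<forall>i<m. \<forall>j<n. \<exists>r\<in>set rs. i \<in> fst r \<and> j \<in> snd r)"

definition communication_cost :: "(nat \<Rightarrow> real) \<Rightarrow> (nat \<Rightarrow> real) \<Rightarrow> reducer list \<Rightarrow> real" where
  "communication_cost wx wy rs = (\<Sum>r\<leftarrow>rs. reducer_load wx wy r)"

end

theory Submission
  imports Defs
begin

text \<open>Every pair (i, j) of X \<times> Y is met by some reducer, so double counting gives
  sum_x * sum_y \<le> \<Sum> r. a r * b r, where a r and b r are the X- and Y-loads of reducer r.
  Since a r + b r \<le> q, each term satisfies 2 a r b r \<le> q (a r + b r) and 2 a r b r \<le> q^2;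
  summing over the reducers bounds the communication cost and the number of reducers.\<close>

lemma sum_le_sum_list_of_cover:
  fixes f :: "'a \<Rightarrow> 'b::ordered_comm_monoid_add"
  assumes "\<forall>r\<in>set rs. finite (F r)"
    and "\<forall>r\<in>set rs. \<forall>x\<in>F r. 0 \<le> f x"
    and "S \<subseteq> (\<Union>r\<in>set rs. F r)"
  shows "sum f S \<le> (\<Sum>r\<leftarrow>rs. sum f (F r))"
  using assms
proof (induction rs arbitrary: S)
  case Nil
  then show ?case by simp
next
  case (Cons r rs)
  have "finite (\<Union>r\<in>set (r # rs). F r)"
    using Cons.prems(1) by simp
  then have fin: "finite S"
    using Cons.prems(3) finite_subset by blast
  have "sum f S = sum f (S \<inter> F r) + sum f (S - F r)"
    using fin by (simp add: sum.Int_Diff)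
  also have "sum f (S \<inter> F r) \<le> sum f (F r)"
    by (rule sum_mono2) (use Cons.prems(1,2) in simp_all)
  also have "sum f (S - F r) \<le> (\<Sum>r\<leftarrow>rs. sum f (F r))"
    using Cons.prems by (intro Cons.IH) auto
  finally show ?case
    by (simp add: add_mono)
qed

lemma two_mult_le_mult_add:
  fixes a b q :: real
  assumes "0 \<le> a" "0 \<le> b" "a + b \<le> q"
  shows "2 * (a * b) \<le> q * (a + b)"
proof -
  have "a * b \<le> a * q"
    using assms by (intro mult_left_mono) simp_all
  moreover have "a * b \<le> q * b"
    using assms by (intro mult_right_mono) simp_all
  ultimately show ?thesis
    by (simp add: algebra_simps)
qed

lemma two_mult_le_square:
  fixes a b q :: real
  assumes "0 \<le> a" "0 \<le> b" "a + b \<le> q"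
  shows "2 * (a * b) \<le> q\<^sup>2"
proof -
  have "4 * (a * b) \<le> (a + b)\<^sup>2"
    using zero_le_power2[of "a - b"] by (simp add: power2_eq_square algebra_simps)
  also have "\<dots> \<le> q\<^sup>2"
    using assms by (intro power_mono) simp_all
  finally show ?thesis
    using assms(1,2) by (smt (verit) mult_nonneg_nonneg)
qed

text \<open>For q \<le> 0 the hypotheses force x = 0, and then x / q = 0 regardless of division by zero.\<close>

lemma divide_le_of_le_mult:
  fixes x q c :: real
  assumes "0 \<le> x" "x \<le> q * c" "0 \<le> c"
  shows "x / q \<le> c"
proof (cases "q > 0")
  case True
  then show ?thesis
    using assms(2) by (simp add: divide_le_eq mult.commute)
next
  case False
  then have "x = 0"
    using assms by (smt (verit) mult_nonpos_nonneg)
  then show ?thesis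
    using assms(3) by simp
qed

lemma X2Y_schema_reducerD:
  assumes "\<forall>i<m. 0 \<le> wx i" "\<forall>j<n. 0 \<le> wy j"
    and "is_X2Y_schema m n wx wy q rs" "r \<in> set rs"
  shows "0 \<le> sum wx (fst r)" "0 \<le> sum wy (snd r)" "sum wx (fst r) + sum wy (snd r) \<le> q"
proof -
  have "fst r \<subseteq> {..<m}" "snd r \<subseteq> {..<n}" "reducer_load wx wy r \<le> q"
    using assms(3,4) unfolding is_X2Y_schema_def by auto
  then show "0 \<le> sum wx (fst r)" "0 \<le> sum wy (snd r)" "sum wx (fst r) + sum wy (snd r) \<le> q"
    using assms(1,2) by (auto simp: reducer_load_def intro!: sum_nonneg)
qed

lemma X2Y_schema_double_counting:
  assumes "\<forall>i<m. 0 \<le> wx i" "\<forall>j<n. 0 \<le> wy j"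
    and schema: "is_X2Y_schema m n wx wy q rs"
  shows "(\<Sum>i<m. wx i) * (\<Sum>j<n. wy j) \<le> (\<Sum>r\<leftarrow>rs. sum wx (fst r) * sum wy (snd r))"
proof -
  let ?w = "\<lambda>(i, j). wx i * wy j"
  have ranges: "fst r \<subseteq> {..<m}" "snd r \<subseteq> {..<n}" if "r \<in> set rs" for r
    using schema that unfolding is_X2Y_schema_def by auto
  have product_sum: "sum wx A * sum wy B = sum ?w (A \<times> B)" for A B
    by (simp add: sum_product sum.cartesian_product)
  have "sum ?w ({..<m} \<times> {..<n}) \<le> (\<Sum>r\<leftarrow>rs. sum ?w (fst r \<times> snd r))"
  proof (rule sum_le_sum_list_of_cover)
    show "\<forall>r\<in>set rs. finite (fst r \<times> snd r)"
    proof
      fix r assume "r \<in> set rs"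
      then have "finite (fst r)" "finite (snd r)"
        using ranges rev_finite_subset[OF finite_lessThan] by blast+
      then show "finite (fst r \<times> snd r)" by simp
    qed
    show "\<forall>r\<in>set rs. \<forall>x\<in>fst r \<times> snd r. 0 \<le> ?w x"
    proof (intro ballI)
      fix r x assume "r \<in> set rs" "x \<in> fst r \<times> snd r"
      then obtain i j where "x = (i, j)" "i < m" "j < n"
        using ranges by blast
      then show "0 \<le> ?w x"
        using assms(1,2) by simp
    qed
    show "{..<m} \<times> {..<n} \<subseteq> (\<Union>r\<in>set rs. fst r \<times> snd r)"
    proof
      fix x assume "x \<in> {..<m} \<times> {..<n}"
      then obtain i j where "x = (i, j)" "i < m" "j < n"
        by blast
      moreover obtain r where "r \<in> set rs" "i \<in> fst r" "j \<in> snd r"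
        using schema \<open>i < m\<close> \<open>j < n\<close> unfolding is_X2Y_schema_def by blast
      ultimately show "x \<in> (\<Union>r\<in>set rs. fst r \<times> snd r)"
        by blast
    qed
  qed
  then show ?thesis
    by (simp only: product_sum)
qed

lemma X2Y_schema_cost_bound:
  assumes "\<forall>i<m. 0 \<le> wx i" "\<forall>j<n. 0 \<le> wy j"
    and "is_X2Y_schema m n wx wy q rs"
  shows "2 * (\<Sum>i<m. wx i) * (\<Sum>j<n. wy j) \<le> q * communication_cost wx wy rs"
proof -
  have "2 * (\<Sum>i<m. wx i) * (\<Sum>j<n. wy j)
      \<le> (\<Sum>r\<leftarrow>rs. 2 * (sum wx (fst r) * sum wy (snd r)))"
    using X2Y_schema_double_counting[OF assms] by (simp add: sum_list_const_mult)
  also have "\<dots> \<le> (\<Sum>r\<leftarrow>rs. q * reducer_load wx wy r)"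
    using X2Y_schema_reducerD[OF assms]
    by (intro sum_list_mono) (simp add: reducer_load_def two_mult_le_mult_add)
  finally show ?thesis
    by (simp add: communication_cost_def sum_list_const_mult)
qed

lemma X2Y_schema_length_bound:
  assumes "\<forall>i<m. 0 \<le> wx i" "\<forall>j<n. 0 \<le> wy j"
    and "is_X2Y_schema m n wx wy q rs"
  shows "2 * (\<Sum>i<m. wx i) * (\<Sum>j<n. wy j) \<le> q\<^sup>2 * real (length rs)"
proof -
  have "2 * (\<Sum>i<m. wx i) * (\<Sum>j<n. wy j)
      \<le> (\<Sum>r\<leftarrow>rs. 2 * (sum wx (fst r) * sum wy (snd r)))"
    using X2Y_schema_double_counting[OF assms] by (simp add: sum_list_const_mult)
  also have "\<dots> \<le> (\<Sum>r\<leftarrow>rs. q\<^sup>2)"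
    using X2Y_schema_reducerD[OF assms] by (intro sum_list_mono) (simp add: two_mult_le_square)
  finally show ?thesis
    by (simp add: sum_list_triv mult.commute)
qed

theorem theorem14:
  fixes m n :: nat and wx wy :: "nat \<Rightarrow> real" and q :: real and rs :: "reducer list"
  assumes "\<forall>i<m. wx i > 0" and "\<forall>j<n. wy j > 0"
    and "(\<Sum>i<m. wx i) > q" and "(\<Sum>j<n. wy j) > q"
    and "is_X2Y_schema m n wx wy q rs"
  shows "communication_cost wx wy rs \<ge> 2 * (\<Sum>i<m. wx i) * (\<Sum>j<n. wy j) / q
       \<and> real (length rs) \<ge> 2 * (\<Sum>i<m. wx i) * (\<Sum>j<n. wy j) / q^2"
proof -
  have wx: "\<forall>i<m. 0 \<le> wx i" and wy: "\<forall>j<n. 0 \<le> wy j"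
    using assms(1,2) by (simp_all add: less_imp_le)
  have "0 \<le> 2 * (\<Sum>i<m. wx i) * (\<Sum>j<n. wy j)"
    using wx wy by (intro mult_nonneg_nonneg sum_nonneg) auto
  moreover have "0 \<le> communication_cost wx wy rs"
    using X2Y_schema_reducerD[OF wx wy assms(5)]
    unfolding communication_cost_def reducer_load_def by (intro sum_list_nonneg) force
  ultimately show ?thesis
    using X2Y_schema_cost_bound[OF wx wy assms(5)] X2Y_schema_length_bound[OF wx wy assms(5)]
    by (simp add: divide_le_of_le_mult)
qed

end
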